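(* Under the standing assumptions (A) below, if $(t_1,t_2)\subseteq\Omega$, then the restriction of $\tau$ to $(t_1,t_2)$ follows a great circle in $S^{n-1}$ through $\lambda$ with constant speed $k$. Furthermore, if $(t_1,t_2)$ is a connected component of $\Omega$, then there exists $t_0\in(t_1,t_2)$ with $\tau(t_0)=\pm\lambda$.
   Context: Standing assumptions (A): $n\ge2$, $L>0$, $\beta\colon[0,L]\to(0,\infty)$ of bounded variation with $1/\beta$ bounded; $\tau\in W^{1,\infty}((0,L);S^{n-1})$ with $k=\operatorname{ess\,sup}|\tau'|>0$; $\lambda\in S^{n-1}$ and $u\in W^{1,\infty}((0,L);\mathbb{R}^n)\setminus\{0\}$ such that $u'+(u\cdot\tau')\tau=\beta(\lambda-(\lambda\cdot\tau)\tau)$ and $|u|\tau'=ku$ a.e. in $(0,L)$; $f=k|u|$, which then satisfies $f'=\beta\,\lambda\cdot\tau'$ and $f(\tau''+k^2\tau)=\beta k^2\,\mathrm{proj}^\perp_{\tau,\tau'}(\lambda)$ weakly in $(0,L)$ (where $\mathrm{proj}^\perp_{V,W}$ is the orthogonal projection onto the orthogonal complement of $\mathrm{span}\{V,W\}$); $\Omega=\{t\in[0,L]:f(t)>0\}$ (open relative to $[0,L]$); and $\tau(t),\tau'(t),\lambda$ are linearly dependent for every $t\in\Omega$ (note $\tau'$ is continuous on $\Omega$). *)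

theory Defs
  imports "HOL-Analysis.Analysis" "HOL-Probability.Essential_Supremum"
begin

definition bounded_variation_on :: "(real \<Rightarrow> real) \<Rightarrow> real \<Rightarrow> real \<Rightarrow> bool" where
  "bounded_variation_on f a b \<longleftrightarrow>
     (\<exists>V. \<forall>xs. sorted xs \<and> set xs \<subseteq> {a..b} \<longrightarrow>
        (\<Sum>i<length xs - 1. \<bar>f (xs ! Suc i) - f (xs ! i)\<bar>) \<le> V)"

end

theory Submission
  imports Defs
begin

text \<open>
  On an interval inside \<Omega> the curve \<tau> is continuously differentiable with |\<tau>'| = k and
  \<tau> \<bottom> \<tau>', and \<lambda> lies in the plane of \<tau> and \<tau>', so \<lambda> = c \<tau> - (s/k) \<tau>' with c = \<lambda>\<cdot>\<tau>
  and c^2 + s^2 = 1. The unit vector e = (c/k) \<tau>' + s \<tau> \<bottom> \<lambda> of that plane satisfies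
  \<tau> = c \<lambda> + s e. Where \<tau> \<noteq> \<plusminus>\<lambda> (that is, s \<noteq> 0) it equals (\<tau> - c \<lambda>)/s, whose derivative
  vanishes; the exceptional points are isolated, so e is constant, and then (c, s)' = k(-s, c)
  forces (c, s) = (cos (k t + \<phi>), sin (k t + \<phi>)).

  On a component (t1, t2) of \<Omega>, u vanishes at both endpoints, while |u|' = (\<beta>/k) \<lambda>\<cdot>\<tau>' = -\<beta> s
  almost everywhere. If \<tau> never meets \<plusminus>\<lambda>, then s has a fixed sign on (t1, t2), so the Lipschitz
  function |u| is monotone there and cannot vanish at both ends while being positive inside.
\<close>

section \<open>Lipschitz functions with almost-everywhere derivatives\<close>

lemma AE_lborel_obtain_negligible:
  assumes "AE t in lborel. P t"
  obtains N where "negligible N" "\<And>t. t \<notin> N \<Longrightarrow> P t"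
proof -
  from assms obtain N where N: "{t \<in> space lborel. \<not> P t} \<subseteq> N" "N \<in> null_sets lborel"
    by (auto elim!: AE_E simp: null_sets_def)
  then have "negligible N"
    by (simp add: negligible_iff_null_sets null_sets_completionI)
  with N(1) that show ?thesis by auto
qed

lemma continuous_on_eq_const_off_negligible:
  fixes f :: "'a::euclidean_space \<Rightarrow> 'b::t2_space"
  assumes "open S" "negligible N" "continuous_on S f"
    and "\<And>t. t \<in> S - N \<Longrightarrow> f t = c" and "t \<in> S"
  shows "f t = c"
proof (rule ccontr)
  assume "f t \<noteq> c"
  define U where "U = S \<inter> f -` (- {c})"
  have "open U"
    unfolding U_def using assms(1,3) by (intro continuous_open_preimage) auto
  moreover have "negligible U"
    by (rule negligible_subset[OF assms(2)]) (use assms(4) in \<open>auto simp: U_def\<close>)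
  moreover have "t \<in> U" using \<open>f t \<noteq> c\<close> assms(5) by (simp add: U_def)
  ultimately show False using open_not_negligible by blast
qed

lemma last_crossing_down:
  fixes h :: "real \<Rightarrow> real"
  assumes "a \<le> b" and cont: "continuous_on {a..b} h" and "h b < y" "y < h a"
  obtains m where "a < m" "m < b" "h m = y"
    and "\<And>d. (h has_real_derivative d) (at m) \<Longrightarrow> d \<le> 0"
proof -
  define S where "S = {a..b} \<inter> h -` {y..}"
  have "compact S"
    unfolding S_def compact_eq_bounded_closed
    by (auto intro: continuous_closed_preimage[OF cont] bounded_subset[of "{a..b}"])
  moreover have "a \<in> S"
    using assms(1,4) by (simp add: S_def)
  ultimately obtain m where "m \<in> S" and max: "\<And>t. t \<in> S \<Longrightarrow> t \<le> m"
    using compact_attains_sup[of S] by blast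
  then have m: "a \<le> m" "m \<le> b" "y \<le> h m" by (auto simp: S_def)
  with assms(3) have "m < b" by (cases "m = b") auto
  have right_below: "h t < y" if "m < t" "t \<le> b" for t
    using max[of t] that m by (force simp: S_def)
  have "h m = y"
  proof (rule ccontr)
    assume "h m \<noteq> y"
    with m have "h m - y > 0" by simp
    moreover have "continuous (at m within {a..b}) h"
      using cont m by (simp add: continuous_on_eq_continuous_within)
    ultimately obtain d where "d > 0"
      and d: "\<And>t. t \<in> {a..b} \<Longrightarrow> dist t m < d \<Longrightarrow> dist (h t) (h m) < h m - y"
      unfolding continuous_within_eps_delta by metis
    define t where "t = min (m + d/2) b"
    have "m < t" "t \<le> b" "t \<in> {a..b}" "dist t m < d"
      using m \<open>m < b\<close> \<open>d > 0\<close> by (auto simp: t_def dist_real_def)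
    with d right_below show False by (force simp: dist_real_def)
  qed
  moreover have "d \<le> 0" if deriv: "(h has_real_derivative d) (at m)" for d
  proof (rule ccontr)
    assume "\<not> d \<le> 0"
    then obtain e where "e > 0" and inc: "\<And>x. x > 0 \<Longrightarrow> x < e \<Longrightarrow> h m < h (m + x)"
      using DERIV_pos_inc_right[OF deriv] by auto
    define x where "x = min (e/2) (b - m)"
    have "0 < x" "x < e" "m + x \<le> b" using \<open>e > 0\<close> \<open>m < b\<close> by (auto simp: x_def)
    with inc[of x] right_below[of "m + x"] \<open>h m = y\<close> show False by simp
  qed
  moreover have "a < m" using m \<open>h m = y\<close> assms(4) by (cases "m = a") auto
  ultimately show thesis using that \<open>m < b\<close> by blast
qed

text \<open>If h a > h b, each value in between is attained at a last crossing point, where h has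
  no positive derivative; these points lie in N, and the Lipschitz image of N is negligible.\<close>

lemma lipschitz_on_le_if_ae_deriv_pos:
  fixes h :: "real \<Rightarrow> real"
  assumes "a \<le> b" and lip: "C-lipschitz_on {a..b} h" and "negligible N"
    and deriv: "\<And>t. t \<in> {a<..<b} - N \<Longrightarrow> (h has_real_derivative h' t) (at t)"
    and pos: "\<And>t. t \<in> {a<..<b} - N \<Longrightarrow> h' t > 0"
  shows "h a \<le> h b"
proof (rule ccontr)
  assume "\<not> h a \<le> h b"
  have "{h b<..<h a} \<subseteq> h ` (N \<inter> {a<..<b})"
  proof
    fix y assume "y \<in> {h b<..<h a}"
    then obtain m where m: "a < m" "m < b" "h m = y"
      and "\<And>d. (h has_real_derivative d) (at m) \<Longrightarrow> d \<le> 0"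
      using last_crossing_down[OF \<open>a \<le> b\<close> lipschitz_on_continuous_on[OF lip]] by auto
    with deriv pos have "m \<in> N" by force
    with m show "y \<in> h ` (N \<inter> {a<..<b})" by auto
  qed
  moreover have "negligible (h ` (N \<inter> {a<..<b}))"
  proof (rule negligible_locally_Lipschitz_image)
    show "negligible (N \<inter> {a<..<b})"
      using \<open>negligible N\<close> by (rule negligible_subset) auto
    fix x assume "x \<in> N \<inter> {a<..<b}"
    then show "\<exists>T B. open T \<and> x \<in> T \<and> (\<forall>y\<in>N \<inter> {a<..<b} \<inter> T. norm (h y - h x) \<le> B * norm (y - x))"
      using lipschitz_onD[OF lip] by (intro exI[of _ UNIV] exI[of _ C]) (auto simp: dist_norm)
  qed simp
  ultimately have "negligible {h b<..<h a}" by (rule negligible_subset[rotated])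
  with \<open>\<not> h a \<le> h b\<close> show False
    using open_not_negligible[of "{h b<..<h a}"] by auto
qed

lemma lipschitz_on_diff_le_if_ae_deriv_le:
  fixes g :: "real \<Rightarrow> real"
  assumes "a \<le> b" and lip: "C-lipschitz_on {a..b} g" and "negligible N"
    and deriv: "\<And>t. t \<in> {a<..<b} - N \<Longrightarrow> (g has_real_derivative g' t) (at t)"
    and le: "\<And>t. t \<in> {a<..<b} - N \<Longrightarrow> g' t \<le> M"
  shows "g b - g a \<le> M * (b - a)"
proof (rule field_le_epsilon)
  fix e :: real assume "e > 0"
  define M' where "M' = M + e / (b - a + 1)"
  have "e / (b - a + 1) > 0" using \<open>e > 0\<close> \<open>a \<le> b\<close> by simp
  have "(\<lambda>t. M' * t - g t) a \<le> (\<lambda>t. M' * t - g t) b"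
  proof (rule lipschitz_on_le_if_ae_deriv_pos[OF \<open>a \<le> b\<close> _ \<open>negligible N\<close>])
    show "(\<bar>M'\<bar> * 1 + C)-lipschitz_on {a..b} (\<lambda>t. M' * t - g t)"
      by (intro lipschitz_on_diff lipschitz_on_cmult_real lipschitz_on_id lip)
    fix t assume t: "t \<in> {a<..<b} - N"
    show "((\<lambda>t. M' * t - g t) has_real_derivative M' - g' t) (at t)"
      by (auto intro!: derivative_eq_intros deriv[OF t])
    show "M' - g' t > 0"
      using le[OF t] \<open>e / (b - a + 1) > 0\<close> by (simp add: M'_def)
  qed
  then have "g b - g a \<le> M' * (b - a)" by (simp add: algebra_simps)
  also have "\<dots> = M * (b - a) + e * ((b - a) / (b - a + 1))"
    by (simp add: M'_def algebra_simps)
  also have "\<dots> \<le> M * (b - a) + e"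
    using \<open>e > 0\<close> \<open>a \<le> b\<close> by (simp add: pos_divide_le_eq)
  finally show "g b - g a \<le> M * (b - a) + e" .
qed

lemma lipschitz_on_deriv_takes_both_signs:
  fixes g :: "real \<Rightarrow> real"
  assumes "a < x" "x < b" and lip: "C-lipschitz_on {a..b} g" and "negligible N"
    and "g a = 0" "g b = 0" "g x > 0"
    and deriv: "\<And>t. t \<in> {a<..<b} - N \<Longrightarrow> (g has_real_derivative g' t) (at t)"
  shows "\<exists>t\<in>{a<..<b} - N. g' t > 0" "\<exists>t\<in>{a<..<b} - N. g' t < 0"
proof -
  show "\<exists>t\<in>{a<..<b} - N. g' t > 0"
  proof (rule ccontr)
    assume nonpos: "\<not> ?thesis"
    have "g x - g a \<le> 0 * (x - a)"
    proof (rule lipschitz_on_diff_le_if_ae_deriv_le[OF _ lipschitz_on_subset[OF lip] \<open>negligible N\<close>,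
          where g' = g'])
      fix t assume "t \<in> {a<..<x} - N"
      with \<open>x < b\<close> nonpos deriv
      show "(g has_real_derivative g' t) (at t)" "g' t \<le> 0" by (auto simp: not_less)
    qed (use assms(1,2) in auto)
    with assms show False by simp
  qed
  show "\<exists>t\<in>{a<..<b} - N. g' t < 0"
  proof (rule ccontr)
    assume nonneg: "\<not> ?thesis"
    have "- g b - - g x \<le> 0 * (b - x)"
    proof (rule lipschitz_on_diff_le_if_ae_deriv_le[OF _ lipschitz_on_minus[OF lipschitz_on_subset[OF lip]]
          \<open>negligible N\<close>, where g' = "\<lambda>t. - g' t"])
      fix t assume "t \<in> {x<..<b} - N"
      with \<open>a < x\<close> nonneg deriv
      show "((\<lambda>t. - g t) has_real_derivative - g' t) (at t)" "- g' t \<le> 0"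
        by (auto simp: not_less intro: DERIV_minus)
    qed (use assms(1,2) in auto)
    with assms show False by simp
  qed
qed

lemma has_real_derivative_inner:
  fixes f g :: "real \<Rightarrow> 'a::real_inner"
  assumes "(f has_vector_derivative f') (at t)" "(g has_vector_derivative g') (at t)"
  shows "((\<lambda>t. f t \<bullet> g t) has_real_derivative f' \<bullet> g t + f t \<bullet> g') (at t)"
  using has_derivative_inner[OF assms[unfolded has_vector_derivative_def]]
  unfolding has_field_derivative_def
  by (rule has_derivative_eq_rhs) (auto simp: fun_eq_iff algebra_simps)

lemma lipschitz_on_vector_mvt_ae:
  fixes f :: "real \<Rightarrow> 'a::real_inner"
  assumes "a \<le> b" "e \<ge> 0" and lip: "C-lipschitz_on {a..b} f" and "negligible N"
    and deriv: "\<And>t. t \<in> {a<..<b} - N \<Longrightarrow> (f has_vector_derivative f' t) (at t)"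
    and close: "\<And>t. t \<in> {a<..<b} - N \<Longrightarrow> norm (f' t - c) \<le> e"
  shows "norm (f b - f a - (b - a) *\<^sub>R c) \<le> e * (b - a)"
proof -
  define v where "v = sgn (f b - f a - (b - a) *\<^sub>R c)"
  have "norm v \<le> 1" by (simp add: v_def norm_sgn)
  obtain B where B: "B-lipschitz_on (f ` {a..b}) (\<lambda>x. v \<bullet> x)"
    using bounded_linear.lipschitz_boundE[OF bounded_linear_inner_right] by blast
  have "(\<lambda>t. v \<bullet> f t) b - (\<lambda>t. v \<bullet> f t) a \<le> (v \<bullet> c + e) * (b - a)"
  proof (rule lipschitz_on_diff_le_if_ae_deriv_le[OF \<open>a \<le> b\<close> _ \<open>negligible N\<close>])
    from B show "(B * C)-lipschitz_on {a..b} (\<lambda>t. v \<bullet> f t)"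
      by (rule lipschitz_on_compose2[OF lip])
    fix t assume t: "t \<in> {a<..<b} - N"
    show "((\<lambda>t. v \<bullet> f t) has_real_derivative v \<bullet> f' t) (at t)"
      using has_real_derivative_inner[OF has_vector_derivative_const deriv[OF t]] by simp
    have "v \<bullet> (f' t - c) \<le> norm v * norm (f' t - c)" by (rule norm_cauchy_schwarz)
    also have "\<dots> \<le> 1 * e"
      using \<open>norm v \<le> 1\<close> close[OF t] by (intro mult_mono) auto
    finally show "v \<bullet> f' t \<le> v \<bullet> c + e" by (simp add: inner_diff_right)
  qed
  moreover have "v \<bullet> (f b - f a - (b - a) *\<^sub>R c) = norm (f b - f a - (b - a) *\<^sub>R c)"
    by (cases "f b - f a - (b - a) *\<^sub>R c = 0")
      (simp_all add: v_def sgn_div_norm dot_square_norm power2_eq_square divide_inverse)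
  ultimately show ?thesis by (simp add: inner_diff_right algebra_simps)
qed

lemma has_vector_derivative_if_ae_and_continuous:
  fixes f :: "real \<Rightarrow> 'a::real_inner"
  assumes lip: "C-lipschitz_on {a..b} f" and "negligible N"
    and deriv: "\<And>t. t \<in> {a<..<b} - N \<Longrightarrow> (f has_vector_derivative f' t) (at t)"
    and cont: "continuous_on {a<..<b} f'" and t: "t \<in> {a<..<b}"
  shows "(f has_vector_derivative f' t) (at t)"
  unfolding has_vector_derivative_def has_derivative_at_alt
proof (intro conjI allI impI bounded_linear_scaleR_left)
  fix e :: real assume "e > 0"
  have "isCont f' t" using cont t by (simp add: continuous_on_eq_continuous_at)
  with \<open>e > 0\<close> obtain d where "d > 0" and d: "\<And>y. dist y t < d \<Longrightarrow> dist (f' y) (f' t) < e"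
    unfolding continuous_at_eps_delta by blast
  have mvt: "norm (f q - f p - (q - p) *\<^sub>R f' t) \<le> e * (q - p)"
    if "p \<le> q" "a < p" "q < b" "dist p t < d" "dist q t < d" for p q
  proof (rule lipschitz_on_vector_mvt_ae[OF \<open>p \<le> q\<close> _ _ \<open>negligible N\<close>])
    show "C-lipschitz_on {p..q} f"
      by (rule lipschitz_on_subset[OF lip]) (use that in auto)
    fix s assume s: "s \<in> {p<..<q} - N"
    with that have "dist s t < d" by (auto simp: dist_real_def)
    with s that show "(f has_vector_derivative f' s) (at s)" "norm (f' s - f' t) \<le> e"
      using deriv d[of s] by (auto simp: dist_norm)
  qed (use \<open>e > 0\<close> in simp)
  show "\<exists>d>0. \<forall>y. norm (y - t) < d \<longrightarrow> norm (f y - f t - (y - t) *\<^sub>R f' t) \<le> e * norm (y - t)"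
  proof (intro exI[of _ "min d (min (t - a) (b - t))"] conjI allI impI)
    fix y assume "norm (y - t) < min d (min (t - a) (b - t))"
    then have y: "a < y" "y < b" "dist y t < d" by (auto simp: dist_real_def)
    show "norm (f y - f t - (y - t) *\<^sub>R f' t) \<le> e * norm (y - t)"
    proof (cases "t \<le> y")
      case True
      then show ?thesis using mvt[of t y] y t \<open>d > 0\<close> by simp
    next
      case False
      then have "norm (f t - f y - (t - y) *\<^sub>R f' t) \<le> e * (t - y)"
        using mvt[of y t] y t \<open>d > 0\<close> by simp
      moreover have "f y - f t - (y - t) *\<^sub>R f' t = - (f t - f y - (t - y) *\<^sub>R f' t)"
        by (simp add: algebra_simps)
      ultimately show ?thesis
        using False by (simp only: norm_minus_cancel) simp
    qed
  qed (use \<open>d > 0\<close> t in auto)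
qed

lemma eventually_neq_if_has_vector_derivative_nonzero:
  fixes f :: "real \<Rightarrow> 'a::real_normed_vector"
  assumes deriv: "(f has_vector_derivative f') (at t)" and "f' \<noteq> 0"
  shows "\<forall>\<^sub>F y in at t. f y \<noteq> v"
proof (cases "f t = v")
  case True
  from \<open>f' \<noteq> 0\<close> have "norm f' / 2 > 0" by simp
  with deriv obtain d where "d > 0" and d: "\<And>y. norm (y - t) < d \<Longrightarrow>
      norm (f y - f t - (y - t) *\<^sub>R f') \<le> norm f' / 2 * norm (y - t)"
    unfolding has_vector_derivative_def has_derivative_at_alt by metis
  have "f y \<noteq> f t" if "y \<noteq> t" "dist y t < d" for y
  proof
    assume "f y = f t"
    with d[of y] that have "\<bar>y - t\<bar> * norm f' \<le> norm f' / 2 * \<bar>y - t\<bar>"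
      by (simp add: dist_norm)
    with that \<open>f' \<noteq> 0\<close> show False by (simp add: mult.commute)
  qed
  with \<open>d > 0\<close> True show ?thesis by (auto simp: eventually_at)
next
  case False
  have "(f \<longlongrightarrow> f t) (at t)"
    using has_vector_derivative_continuous[OF deriv] by (simp add: continuous_at)
  with False show ?thesis using tendsto_imp_eventually_ne by blast
qed

lemma has_real_derivative_from_square:
  fixes f g :: "real \<Rightarrow> real"
  assumes "isCont f x" "f x \<noteq> 0"
    and square: "\<forall>\<^sub>F y in nhds x. (f y)\<^sup>2 = g y"
    and deriv: "(g has_real_derivative D) (at x)"
  shows "(f has_real_derivative D / (2 * f x)) (at x)"
proof -
  define \<sigma> where "\<sigma> = sgn (f x)"
  have "\<bar>f x\<bar> > 0" using \<open>f x \<noteq> 0\<close> by simp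
  then obtain e where "e > 0" and "\<forall>y. dist y x < e \<longrightarrow> dist (f y) (f x) < \<bar>f x\<bar>"
    using \<open>isCont f x\<close> unfolding continuous_at_eps_delta by blast
  then have near: "\<forall>\<^sub>F y in nhds x. dist (f y) (f x) < \<bar>f x\<bar>"
    unfolding eventually_nhds_metric by blast
  have same_sign: "f y = \<sigma> * \<bar>f y\<bar>" if "dist (f y) (f x) < \<bar>f x\<bar>" for y
    using that unfolding \<sigma>_def dist_real_def by (cases "f x > 0"; cases "f y > 0") auto
  from near square have ev: "\<forall>\<^sub>F y in nhds x. f y = \<sigma> * sqrt (g y)"
    by eventually_elim (metis same_sign real_sqrt_abs)
  have gx: "g x = (f x)\<^sup>2"
    using eventually_nhds_x_imp_x[OF square] by simp
  have "((\<lambda>y. \<sigma> * sqrt (g y)) has_real_derivative \<sigma> * (inverse (sqrt (g x)) / 2 * D)) (at x)"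
    using \<open>f x \<noteq> 0\<close> by (intro DERIV_cmult DERIV_chain2[OF DERIV_real_sqrt deriv]) (simp add: gx)
  moreover have "\<sigma> * (inverse (sqrt (g x)) / 2 * D) = D / (2 * f x)"
    using \<open>f x \<noteq> 0\<close> by (simp add: gx \<sigma>_def sgn_if abs_if field_simps)
  ultimately show ?thesis
    using DERIV_cong_ev[OF refl ev refl] by (simp add: mult.commute)
qed

lemma has_real_derivative_norm:
  fixes f :: "real \<Rightarrow> 'a::real_inner"
  assumes "(f has_vector_derivative f') (at t)" "f t \<noteq> 0"
  shows "((\<lambda>t. norm (f t)) has_real_derivative sgn (f t) \<bullet> f') (at t)"
  using has_derivative_compose[OF assms(1)[unfolded has_vector_derivative_def] has_derivative_norm[OF assms(2)]]
  unfolding has_field_derivative_def o_def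
  by (rule has_derivative_eq_rhs) (auto simp: fun_eq_iff mult.commute inner_commute)

lemma unit_norm_has_vector_derivative_orthogonal:
  fixes f :: "real \<Rightarrow> 'a::real_inner"
  assumes "open S" "t \<in> S" "\<And>y. y \<in> S \<Longrightarrow> norm (f y) = 1"
    and deriv: "(f has_vector_derivative f') (at t)"
  shows "f t \<bullet> f' = 0"
proof -
  have "((\<lambda>y. f y \<bullet> f y) has_real_derivative f' \<bullet> f t + f t \<bullet> f') (at t)"
    by (rule has_real_derivative_inner[OF deriv deriv])
  moreover have "((\<lambda>y. f y \<bullet> f y) has_real_derivative 0) (at t)"
    by (rule has_field_derivative_transform_within_open[OF DERIV_const assms(1,2)])
      (simp add: assms(3) dot_square_norm)
  ultimately have "f' \<bullet> f t + f t \<bullet> f' = 0" by (rule DERIV_unique)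
  then show ?thesis by (simp add: inner_commute)
qed

lemma cos_sin_of_rotation_ode:
  fixes c s :: "real \<Rightarrow> real"
  assumes "convex I" "t0 \<in> I" "(c t0)\<^sup>2 + (s t0)\<^sup>2 = 1"
    and c': "\<And>t. t \<in> I \<Longrightarrow> (c has_real_derivative - k * s t) (at t)"
    and s': "\<And>t. t \<in> I \<Longrightarrow> (s has_real_derivative k * c t) (at t)"
  obtains \<phi> where "\<And>t. t \<in> I \<Longrightarrow> c t = cos (k * t + \<phi>) \<and> s t = sin (k * t + \<phi>)"
proof -
  obtain \<theta> where \<theta>: "c t0 = cos \<theta>" "s t0 = sin \<theta>"
    using sincos_total_2pi[OF assms(3)] by metis
  define \<phi> where "\<phi> = \<theta> - k * t0"
  define D where "D t = (c t - cos (k * t + \<phi>))\<^sup>2 + (s t - sin (k * t + \<phi>))\<^sup>2" for t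
  have "(D has_real_derivative 0) (at t within I)" if "t \<in> I" for t
  proof -
    have "(D has_real_derivative
        2 * (c t - cos (k * t + \<phi>)) * (- k * s t + sin (k * t + \<phi>) * k)
      + 2 * (s t - sin (k * t + \<phi>)) * (k * c t - cos (k * t + \<phi>) * k)) (at t)"
      unfolding D_def
      by (auto intro!: derivative_eq_intros c'[OF that] s'[OF that] simp: algebra_simps)
    then show ?thesis
      by (auto intro: has_field_derivative_at_within simp: algebra_simps)
  qed
  then obtain d where "\<And>t. t \<in> I \<Longrightarrow> D t = d"
    using has_field_derivative_zero_constant[OF \<open>convex I\<close>] by blast
  moreover have "D t0 = 0" by (simp add: D_def \<phi>_def \<theta>)
  ultimately have "D t = 0" if "t \<in> I" for t using that \<open>t0 \<in> I\<close> by metis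
  then show thesis
    by (intro that[of \<phi>]) (simp add: D_def sum_power2_eq_zero_iff)
qed

lemma connected_nonvanishing_sign_cases:
  fixes f :: "'a::topological_space \<Rightarrow> real"
  assumes "connected S" "continuous_on S f" "\<And>x. x \<in> S \<Longrightarrow> f x \<noteq> 0"
  shows "(\<forall>x\<in>S. f x > 0) \<or> (\<forall>x\<in>S. f x < 0)"
proof (rule ccontr)
  assume "\<not> ?thesis"
  then obtain x y where "x \<in> S" "y \<in> S" "f x \<le> 0" "0 \<le> f y" by (auto simp: not_less)
  moreover have "connected (f ` S)"
    using assms(1,2) by (rule connected_continuous_image[rotated])
  ultimately have "0 \<in> f ` S"
    using connectedD_interval[of "f ` S" "f x" "f y" 0] by simp
  with assms(3) show False by auto
qed

lemma open_interval_component_endpoints: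
  fixes S :: "real set"
  assumes comp: "{a<..<b} \<in> components S"
  shows "a \<notin> S" "b \<notin> S"
proof -
  have "a < b" using in_components_nonempty[OF comp] by simp
  have maximal: "\<And>D. D \<noteq> {} \<Longrightarrow> {a<..<b} \<subseteq> D \<Longrightarrow> D \<subseteq> S \<Longrightarrow> connected D \<Longrightarrow> D = {a<..<b}"
    using comp unfolding in_components_maximal by blast
  show "a \<notin> S"
  proof
    assume "a \<in> S"
    with in_components_subset[OF comp] have "{a..<b} \<subseteq> S"
      by (metis atLeastLessThan_iff greaterThanLessThan_iff le_less subsetI subsetD)
    then have "{a..<b} = {a<..<b}"
      using \<open>a < b\<close> by (intro maximal) (auto simp: is_interval_connected is_interval_co)
    moreover have "a \<in> {a..<b}" using \<open>a < b\<close> by simp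
    ultimately show False by simp
  qed
  show "b \<notin> S"
  proof
    assume "b \<in> S"
    with in_components_subset[OF comp] have "{a<..b} \<subseteq> S"
      by (metis greaterThanAtMost_iff greaterThanLessThan_iff le_less subsetI subsetD)
    then have "{a<..b} = {a<..<b}"
      using \<open>a < b\<close> by (intro maximal) (auto simp: is_interval_connected is_interval_oc)
    moreover have "b \<in> {a<..b}" using \<open>a < b\<close> by simp
    ultimately show False by simp
  qed
qed

lemma in_span_if_dependent_on_orthogonal_pair:
  fixes x y z :: "'a::real_inner"
  assumes "x \<bullet> y = 0" "x \<noteq> 0" "y \<noteq> 0"
    and "(a, b, c) \<noteq> (0, 0, 0)" "a *\<^sub>R x + b *\<^sub>R y + c *\<^sub>R z = 0"
  shows "z \<in> span {x, y}"
proof (cases "c = 0")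
  case True
  with assms(5) have "x \<bullet> (a *\<^sub>R x + b *\<^sub>R y) = 0" "y \<bullet> (a *\<^sub>R x + b *\<^sub>R y) = 0" by simp_all
  with assms(1-3) have "a = 0" "b = 0"
    by (simp_all add: inner_add_right inner_commute[of y x])
  with True assms(4) show ?thesis by simp
next
  case False
  from assms(5) have "c *\<^sub>R z = - (a *\<^sub>R x + b *\<^sub>R y)"
    by (metis add.inverse_unique)
  then have "c *\<^sub>R z \<in> span {x, y}"
    by (metis span_add span_neg span_mul span_base insertI1 insertI2 singletonI)
  with False show ?thesis
    using span_mul[of "c *\<^sub>R z" "{x, y}" "1 / c"] by simp
qed

section \<open>Sphere curves with \<lambda> in the plane of \<tau> and \<tau>'\<close>

locale coplanar_sphere_curve =
  fixes \<tau> \<tau>' :: "real \<Rightarrow> 'a::euclidean_space" and lam :: 'a and k t1 t2 :: real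
  assumes deriv: "\<And>t. t \<in> {t1<..<t2} \<Longrightarrow> (\<tau> has_vector_derivative \<tau>' t) (at t)"
    and continuous_deriv: "continuous_on {t1<..<t2} \<tau>'"
    and unit: "\<And>t. t \<in> {t1<..<t2} \<Longrightarrow> norm (\<tau> t) = 1"
    and speed: "\<And>t. t \<in> {t1<..<t2} \<Longrightarrow> norm (\<tau>' t) = k"
    and k_pos: "k > 0"
    and lam_unit: "norm lam = 1"
    and lam_in_span: "\<And>t. t \<in> {t1<..<t2} \<Longrightarrow> lam \<in> span {\<tau> t, \<tau>' t}"
begin

abbreviation "I \<equiv> {t1<..<t2}"

text \<open>cosine and sine turn out to be cos (k t + \<phi>) and sin (k t + \<phi>), and lam_perp the fixed unit
  vector e of the great circle.\<close>

definition cosine :: "real \<Rightarrow> real" where "cosine t = lam \<bullet> \<tau> t"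

definition sine :: "real \<Rightarrow> real" where "sine t = - (lam \<bullet> \<tau>' t) / k"

definition lam_perp :: "real \<Rightarrow> 'a" where
  "lam_perp t = (cosine t / k) *\<^sub>R \<tau>' t + sine t *\<^sub>R \<tau> t"

lemma tangent: "t \<in> I \<Longrightarrow> \<tau> t \<bullet> \<tau>' t = 0"
  using unit by (intro unit_norm_has_vector_derivative_orthogonal[OF open_greaterThanLessThan _ _ deriv])

lemma inner_tau_dtau:
  assumes "t \<in> I"
  shows "\<tau> t \<bullet> \<tau> t = 1" "\<tau>' t \<bullet> \<tau>' t = k\<^sup>2" "\<tau> t \<bullet> \<tau>' t = 0" "\<tau>' t \<bullet> \<tau> t = 0"
  using unit[OF assms] speed[OF assms] tangent[OF assms]
  by (simp_all add: dot_square_norm inner_commute)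

lemma lam_decomp: "t \<in> I \<Longrightarrow> lam = cosine t *\<^sub>R \<tau> t - (sine t / k) *\<^sub>R \<tau>' t"
proof -
  assume t: "t \<in> I"
  from lam_in_span[OF t] obtain a b where "lam - a *\<^sub>R \<tau> t = b *\<^sub>R \<tau>' t"
    by (auto simp: span_insert span_singleton)
  then have lam: "lam = a *\<^sub>R \<tau> t + b *\<^sub>R \<tau>' t" by (simp add: algebra_simps)
  have "cosine t = a" "sine t = - b * k"
    using inner_tau_dtau[OF t] k_pos unfolding cosine_def sine_def
    by (simp_all add: lam inner_add_left power2_eq_square)
  with lam k_pos show ?thesis by simp
qed

lemma cosine_sine_sq: "t \<in> I \<Longrightarrow> (cosine t)\<^sup>2 + (sine t)\<^sup>2 = 1"
proof -
  assume t: "t \<in> I"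
  have "1 = lam \<bullet> lam" using lam_unit by (simp add: dot_square_norm)
  also have "\<dots> = lam \<bullet> (cosine t *\<^sub>R \<tau> t - (sine t / k) *\<^sub>R \<tau>' t)"
    using lam_decomp[OF t] by simp
  also have "\<dots> = cosine t * (lam \<bullet> \<tau> t) - (sine t / k) * (lam \<bullet> \<tau>' t)"
    by (simp add: inner_diff_right)
  also have "\<dots> = (cosine t)\<^sup>2 + (sine t)\<^sup>2"
    using k_pos by (simp add: cosine_def sine_def power2_eq_square)
  finally show ?thesis by simp
qed

lemma tau_decomp: "t \<in> I \<Longrightarrow> \<tau> t = cosine t *\<^sub>R lam + sine t *\<^sub>R lam_perp t"
proof -
  assume t: "t \<in> I"
  have "cosine t *\<^sub>R lam + sine t *\<^sub>R lam_perp t = ((cosine t)\<^sup>2 + (sine t)\<^sup>2) *\<^sub>R \<tau> t"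
    by (subst lam_decomp[OF t])
      (simp add: lam_perp_def algebra_simps power2_eq_square)
  then show ?thesis using cosine_sine_sq[OF t] by simp
qed

lemma lam_perp_unit: "t \<in> I \<Longrightarrow> lam_perp t \<bullet> lam_perp t = 1"
  using inner_tau_dtau cosine_sine_sq k_pos
  by (simp add: lam_perp_def inner_add_left inner_add_right power2_eq_square field_simps)

lemma lam_perp_orthogonal: "t \<in> I \<Longrightarrow> lam_perp t \<bullet> lam = 0"
  using k_pos
  by (simp add: lam_perp_def inner_add_left cosine_def sine_def inner_commute inner_diff_right)

lemma continuous_on_tau: "continuous_on I \<tau>"
  using deriv
  by (intro continuous_at_imp_continuous_on ballI has_vector_derivative_continuous) auto

lemma continuous_on_cosine: "continuous_on I cosine"
  unfolding cosine_def by (intro continuous_intros continuous_on_tau)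

lemma continuous_on_sine: "continuous_on I sine"
  unfolding sine_def by (intro continuous_intros continuous_deriv) (use k_pos in simp)

lemma continuous_on_lam_perp: "continuous_on I lam_perp"
  unfolding lam_perp_def
  by (intro continuous_intros continuous_on_cosine continuous_on_sine continuous_on_tau continuous_deriv)
    (use k_pos in simp)

lemma cosine_deriv: "t \<in> I \<Longrightarrow> (cosine has_real_derivative - k * sine t) (at t)"
  using has_real_derivative_inner[OF has_vector_derivative_const deriv, of t lam] k_pos
  by (simp add: cosine_def[abs_def] sine_def)

lemma sine_deriv:
  assumes t: "t \<in> I" and "sine t \<noteq> 0"
  shows "(sine has_real_derivative k * cosine t) (at t)"
proof -
  have cont: "isCont sine t"
    using continuous_on_sine t by (simp add: continuous_on_eq_continuous_at)
  have square: "\<forall>\<^sub>F y in nhds t. (sine y)\<^sup>2 = 1 - (cosine y)\<^sup>2"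
    unfolding eventually_nhds using t cosine_sine_sq
    by (intro exI[of _ I]) (auto simp: algebra_simps)
  have "((\<lambda>y. 1 - (cosine y)\<^sup>2) has_real_derivative 2 * k * cosine t * sine t) (at t)"
    by (auto intro!: derivative_eq_intros cosine_deriv[OF t])
  from has_real_derivative_from_square[OF cont \<open>sine t \<noteq> 0\<close> square this]
  have "(sine has_real_derivative 2 * k * cosine t * sine t / (2 * sine t)) (at t)" .
  then show ?thesis using \<open>sine t \<noteq> 0\<close> by simp
qed

lemma tau_eq_pm_lam_if_sine_eq_0: "t \<in> I \<Longrightarrow> sine t = 0 \<Longrightarrow> \<tau> t = lam \<or> \<tau> t = - lam"
proof -
  assume t: "t \<in> I" and "sine t = 0"
  then have "lam = cosine t *\<^sub>R \<tau> t" "cosine t = 1 \<or> cosine t = -1"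
    using lam_decomp[OF t] cosine_sine_sq[OF t] by (auto simp: power2_eq_1_iff)
  then show ?thesis by auto
qed

lemma sine_zeros_isolated: "t \<in> I \<Longrightarrow> \<not> t islimpt {y \<in> I. sine y = 0}"
proof -
  assume t: "t \<in> I"
  have "\<tau>' t \<noteq> 0" using speed[OF t] k_pos by auto
  with deriv[OF t] have "\<forall>\<^sub>F y in at t. \<tau> y \<noteq> lam" "\<forall>\<^sub>F y in at t. \<tau> y \<noteq> - lam"
    by (auto intro: eventually_neq_if_has_vector_derivative_nonzero)
  then have "\<forall>\<^sub>F y in at t. y \<notin> {y \<in> I. sine y = 0}"
    by eventually_elim (use tau_eq_pm_lam_if_sine_eq_0 in blast)
  then show ?thesis by (simp add: islimpt_iff_eventually)
qed

lemma tangent_formula: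
  assumes t: "t \<in> I" and "sine t \<noteq> 0"
  shows "\<tau>' t + (k * sine t) *\<^sub>R lam = (k * cosine t / sine t) *\<^sub>R (\<tau> t - cosine t *\<^sub>R lam)"
proof -
  define c s where "c = cosine t" and "s = sine t"
  have "s \<noteq> 0" using assms by (simp add: s_def)
  have "k * s - k / s = k * (s * s - 1) / s"
    using \<open>s \<noteq> 0\<close> by (simp add: field_simps)
  also have "s * s - 1 = - (c * c)"
    using cosine_sine_sq[OF t] by (simp add: c_def s_def power2_eq_square)
  finally have coeff: "k * s - k / s = - (k * (c * c) / s)" by simp
  have "(s / k) *\<^sub>R \<tau>' t = c *\<^sub>R \<tau> t - lam"
    using lam_decomp[OF t] by (simp add: c_def s_def algebra_simps)
  then have "\<tau>' t = (k / s) *\<^sub>R (c *\<^sub>R \<tau> t - lam)"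
    using k_pos \<open>s \<noteq> 0\<close> by (metis scaleR_scaleR divide_self_if times_divide_times_eq
        mult.commute scaleR_one less_irrefl)
  then have "\<tau>' t + (k * s) *\<^sub>R lam = (k * c / s) *\<^sub>R \<tau> t + (k * s - k / s) *\<^sub>R lam"
    by (simp add: algebra_simps)
  also have "\<dots> = (k * c / s) *\<^sub>R (\<tau> t - c *\<^sub>R lam)"
    by (simp only: coeff) (simp add: algebra_simps)
  finally show ?thesis by (simp only: c_def s_def)
qed

text \<open>lam_perp is not visibly differentiable, since \<tau>' need not be; but where sine \<noteq> 0 it equals
  (\<tau> - cosine \<cdot> lam) / sine.\<close>

lemma lam_perp_deriv_zero:
  assumes t: "t \<in> I" and "sine t \<noteq> 0"
  shows "(lam_perp has_vector_derivative 0) (at t)"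
proof -
  define c s where "c = cosine t" and "s = sine t"
  define U where "U = I \<inter> sine -` (- {0})"
  have "open U"
    unfolding U_def by (intro continuous_open_preimage continuous_on_sine) auto
  have "t \<in> U" using assms by (simp add: U_def)
  have eq: "inverse (sine y) *\<^sub>R (\<tau> y - cosine y *\<^sub>R lam) = lam_perp y" if "y \<in> U" for y
    using that tau_decomp[of y] by (auto simp: U_def)
  have "((\<lambda>y. inverse (sine y)) has_real_derivative - (k * c * inverse (s ^ 2))) (at t)"
    using DERIV_inverse_fun[OF sine_deriv[OF assms] \<open>sine t \<noteq> 0\<close>]
    unfolding c_def s_def power2_eq_square by (simp add: mult.assoc)
  moreover have "((\<lambda>y. \<tau> y - cosine y *\<^sub>R lam) has_vector_derivative \<tau>' t + (k * s) *\<^sub>R lam) (at t)"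
    using has_vector_derivative_diff[OF deriv[OF t]
        has_vector_derivative_scaleR[OF cosine_deriv[OF t] has_vector_derivative_const]]
    by (simp add: s_def)
  ultimately have "((\<lambda>y. inverse (sine y) *\<^sub>R (\<tau> y - cosine y *\<^sub>R lam)) has_vector_derivative
      inverse s *\<^sub>R (\<tau>' t + (k * s) *\<^sub>R lam) + (- (k * c * inverse (s ^ 2))) *\<^sub>R (\<tau> t - c *\<^sub>R lam)) (at t)"
    unfolding s_def c_def by (rule has_vector_derivative_scaleR)
  also have "inverse s *\<^sub>R (\<tau>' t + (k * s) *\<^sub>R lam) + (- (k * c * inverse (s ^ 2))) *\<^sub>R (\<tau> t - c *\<^sub>R lam) = 0"
  proof -
    have "inverse s * (k * c / s) = k * c * inverse (s ^ 2)"
      by (simp add: power2_eq_square divide_inverse)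
    then show ?thesis
      by (simp only: tangent_formula[OF assms, folded c_def s_def] scaleR_scaleR scaleR_minus_left) simp
  qed
  finally show ?thesis
    by (rule has_vector_derivative_transform_within_open[OF _ \<open>open U\<close> \<open>t \<in> U\<close> eq])
qed

lemma lam_perp_constant:
  assumes "t \<in> I" "t' \<in> I"
  shows "lam_perp t = lam_perp t'"
proof -
  define a b where "a = min t t'" and "b = max t t'"
  have ab: "{a..b} \<subseteq> I" using assms by (auto simp: a_def b_def)
  have "finite ({a..b} \<inter> {y \<in> I. sine y = 0})"
    using ab sine_zeros_isolated by (intro finite_not_islimpt_in_compact) auto
  then have "lam_perp x = lam_perp a" if "x \<in> {a..b}" for x
  proof (rule has_derivative_zero_unique_strong_interval[OF _ _ refl _ that])
    show "continuous_on {a..b} lam_perp"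
      using continuous_on_lam_perp ab by (rule continuous_on_subset)
    fix y assume "y \<in> {a..b} - {a..b} \<inter> {y \<in> I. sine y = 0}"
    with ab have "(lam_perp has_vector_derivative 0) (at y)"
      by (intro lam_perp_deriv_zero) auto
    then show "(lam_perp has_derivative (\<lambda>h. 0)) (at y within {a..b})"
      by (auto simp: has_vector_derivative_def intro: has_derivative_at_withinI)
  qed
  then show ?thesis by (metis a_def b_def atLeastAtMost_iff max.cobounded1 max.cobounded2
        min.cobounded1 min.cobounded2)
qed

theorem great_circle:
  assumes "t1 < t2"
  obtains e \<phi> where "norm e = 1" "e \<bullet> lam = 0"
    "\<And>t. t \<in> I \<Longrightarrow> \<tau> t = cos (k * t + \<phi>) *\<^sub>R lam + sin (k * t + \<phi>) *\<^sub>R e"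
proof -
  define t0 where "t0 = (t1 + t2) / 2"
  have "t0 \<in> I" using assms by (simp add: t0_def)
  define e where "e = lam_perp t0"
  have e: "lam_perp t = e" if "t \<in> I" for t
    using lam_perp_constant[OF that \<open>t0 \<in> I\<close>] by (simp add: e_def)
  have "sine t = \<tau> t \<bullet> e" if t: "t \<in> I" for t
    using lam_perp_unit[OF t] lam_perp_orthogonal[OF t] e[OF t]
    by (subst tau_decomp[OF t]) (simp add: inner_commute inner_add_right)
  moreover have "\<tau>' t \<bullet> e = k * cosine t" if t: "t \<in> I" for t
    using inner_tau_dtau[OF t] e[OF t, symmetric] k_pos
    by (simp add: lam_perp_def inner_add_right power2_eq_square)
  ultimately have sine_deriv': "(sine has_real_derivative k * cosine t) (at t)" if "t \<in> I" for t
    using has_real_derivative_inner[OF deriv[OF that] has_vector_derivative_const, of e]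
      has_field_derivative_transform_within_open[of "\<lambda>y. \<tau> y \<bullet> e" _ t I sine] that
    by (simp add: inner_commute)
  obtain \<phi> where "\<And>t. t \<in> I \<Longrightarrow> cosine t = cos (k * t + \<phi>) \<and> sine t = sin (k * t + \<phi>)"
    using cos_sin_of_rotation_ode[OF convex_real_interval(8) \<open>t0 \<in> I\<close> cosine_sine_sq[OF \<open>t0 \<in> I\<close>]
        cosine_deriv sine_deriv'] by blast
  moreover have "norm e = 1" "e \<bullet> lam = 0"
    using lam_perp_unit[OF \<open>t0 \<in> I\<close>] lam_perp_orthogonal[OF \<open>t0 \<in> I\<close>]
    by (simp_all add: e_def norm_eq_1)
  ultimately show thesis
    using that tau_decomp e by metis
qed

lemma sine_sign_cases:
  assumes "\<And>t. t \<in> I \<Longrightarrow> \<tau> t \<noteq> lam \<and> \<tau> t \<noteq> - lam"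
  shows "(\<forall>t\<in>I. sine t > 0) \<or> (\<forall>t\<in>I. sine t < 0)"
  using assms tau_eq_pm_lam_if_sine_eq_0
  by (intro connected_nonvanishing_sign_cases continuous_on_sine) auto

end

locale standing_assumptions =
  fixes L k :: real and \<beta> :: "real \<Rightarrow> real"
    and \<tau> d\<tau> u du :: "real \<Rightarrow> 'a::euclidean_space" and lam :: 'a and \<Omega> :: "real set"
  assumes k_pos: "k > 0"
    and lam_unit: "norm lam = 1"
    and \<beta>_pos: "\<forall>t\<in>{0..L}. \<beta> t > 0"
    and \<tau>_lip: "\<exists>C. C-lipschitz_on {0..L} \<tau>"
    and \<tau>_sphere: "\<forall>t\<in>{0..L}. norm (\<tau> t) = 1"
    and \<tau>_deriv: "AE t in lborel. t \<in> {0<..<L} \<longrightarrow> (\<tau> has_vector_derivative d\<tau> t) (at t)"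
    and u_lip: "\<exists>C. C-lipschitz_on {0..L} u"
    and u_deriv: "AE t in lborel. t \<in> {0<..<L} \<longrightarrow> (u has_vector_derivative du t) (at t)"
    and eq1: "AE t in lborel. t \<in> {0<..<L} \<longrightarrow>
               du t + (u t \<bullet> d\<tau> t) *\<^sub>R \<tau> t = \<beta> t *\<^sub>R (lam - (lam \<bullet> \<tau> t) *\<^sub>R \<tau> t)"
    and eq2: "AE t in lborel. t \<in> {0<..<L} \<longrightarrow> norm (u t) *\<^sub>R d\<tau> t = k *\<^sub>R u t"
    and \<Omega>_def: "\<Omega> = {t \<in> {0..L}. k * norm (u t) > 0}"
    and d\<tau>_cont: "continuous_on \<Omega> d\<tau>"
    and dep: "\<forall>t\<in>\<Omega>. \<exists>a b c. (a, b, c) \<noteq> (0, 0, 0) \<and>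
                 a *\<^sub>R \<tau> t + b *\<^sub>R d\<tau> t + c *\<^sub>R lam = 0"
begin

lemma ae_equations:
  obtains N where "negligible N"
    and "\<And>t. t \<in> {0<..<L} - N \<Longrightarrow> (\<tau> has_vector_derivative d\<tau> t) (at t)"
    and "\<And>t. t \<in> {0<..<L} - N \<Longrightarrow> (u has_vector_derivative du t) (at t)"
    and "\<And>t. t \<in> {0<..<L} - N \<Longrightarrow>
           du t + (u t \<bullet> d\<tau> t) *\<^sub>R \<tau> t = \<beta> t *\<^sub>R (lam - (lam \<bullet> \<tau> t) *\<^sub>R \<tau> t)"
    and "\<And>t. t \<in> {0<..<L} - N \<Longrightarrow> norm (u t) *\<^sub>R d\<tau> t = k *\<^sub>R u t"
proof -
  from \<tau>_deriv u_deriv eq1 eq2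
  have "AE t in lborel. t \<in> {0<..<L} \<longrightarrow> (\<tau> has_vector_derivative d\<tau> t) (at t) \<and>
      (u has_vector_derivative du t) (at t) \<and>
      du t + (u t \<bullet> d\<tau> t) *\<^sub>R \<tau> t = \<beta> t *\<^sub>R (lam - (lam \<bullet> \<tau> t) *\<^sub>R \<tau> t) \<and>
      norm (u t) *\<^sub>R d\<tau> t = k *\<^sub>R u t"
    by eventually_elim blast
  then obtain N where "negligible N" "\<And>t. t \<notin> N \<Longrightarrow> t \<in> {0<..<L} \<longrightarrow> (\<tau> has_vector_derivative d\<tau> t) (at t) \<and>
      (u has_vector_derivative du t) (at t) \<and>
      du t + (u t \<bullet> d\<tau> t) *\<^sub>R \<tau> t = \<beta> t *\<^sub>R (lam - (lam \<bullet> \<tau> t) *\<^sub>R \<tau> t) \<and>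
      norm (u t) *\<^sub>R d\<tau> t = k *\<^sub>R u t"
    by (rule AE_lborel_obtain_negligible) auto
  then show thesis using that by blast
qed

lemma u_nonzero: "t \<in> \<Omega> \<Longrightarrow> u t \<noteq> 0"
  by (auto simp: \<Omega>_def)

lemma Omega_subset: "\<Omega> \<subseteq> {0..L}"
  by (auto simp: \<Omega>_def)

lemma interior_Omega: "interior \<Omega> \<subseteq> {0<..<L}"
  using interior_mono[OF Omega_subset] by simp

lemma tau_has_derivative:
  assumes t: "t \<in> interior \<Omega>"
  shows "(\<tau> has_vector_derivative d\<tau> t) (at t)"
proof -
  obtain e where "e > 0" and e: "ball t e \<subseteq> \<Omega>"
    using t by (meson mem_interior)
  define a b where "a = t - e / 2" and "b = t + e / 2"
  have "{a..b} \<subseteq> ball t e" using \<open>e > 0\<close> by (auto simp: a_def b_def dist_real_def)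
  with e have ab: "{a..b} \<subseteq> \<Omega>" by blast
  have "{a<..<b} \<subseteq> interior \<Omega>" using ab by (intro interior_maximal) auto
  then have ab0L: "{a<..<b} \<subseteq> {0<..<L}" using interior_Omega by blast
  obtain C where "C-lipschitz_on {0..L} \<tau>" using \<tau>_lip by blast
  moreover have "{a..b} \<subseteq> {0..L}" using ab Omega_subset by blast
  ultimately have lip: "C-lipschitz_on {a..b} \<tau>" by (rule lipschitz_on_subset)
  obtain N where "negligible N"
    and N: "\<And>s. s \<in> {0<..<L} - N \<Longrightarrow> (\<tau> has_vector_derivative d\<tau> s) (at s)"
    using ae_equations by metis
  have cont: "continuous_on {a<..<b} d\<tau>"
    using ab by (intro continuous_on_subset[OF d\<tau>_cont]) auto
  have "t \<in> {a<..<b}" using \<open>e > 0\<close> by (simp add: a_def b_def)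
  show ?thesis
  proof (rule has_vector_derivative_if_ae_and_continuous[OF lip \<open>negligible N\<close> _ cont \<open>t \<in> {a<..<b}\<close>])
    fix s assume "s \<in> {a<..<b} - N"
    with ab0L show "(\<tau> has_vector_derivative d\<tau> s) (at s)" by (intro N) auto
  qed
qed

lemma norm_dtau:
  assumes t: "t \<in> interior \<Omega>"
  shows "norm (d\<tau> t) = k"
proof -
  obtain N where "negligible N"
    and eq: "\<And>s. s \<in> {0<..<L} - N \<Longrightarrow> norm (u s) *\<^sub>R d\<tau> s = k *\<^sub>R u s"
    using ae_equations by metis
  show ?thesis
  proof (rule continuous_on_eq_const_off_negligible[OF open_interior \<open>negligible N\<close> _ _ t])
    show "continuous_on (interior \<Omega>) (\<lambda>s. norm (d\<tau> s))"
      by (intro continuous_intros continuous_on_subset[OF d\<tau>_cont interior_subset])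
    fix s assume s: "s \<in> interior \<Omega> - N"
    with interior_Omega have "s \<in> {0<..<L} - N" by blast
    from arg_cong[OF eq[OF this], of norm] k_pos
    have "norm (u s) * norm (d\<tau> s) = k * norm (u s)" by simp
    moreover have "u s \<noteq> 0" using s interior_subset u_nonzero by blast
    ultimately show "norm (d\<tau> s) = k" by simp
  qed
qed

lemma tau_unit: "t \<in> interior \<Omega> \<Longrightarrow> norm (\<tau> t) = 1"
  using interior_subset Omega_subset \<tau>_sphere by blast

lemma tau_dtau_orthogonal: "t \<in> interior \<Omega> \<Longrightarrow> \<tau> t \<bullet> d\<tau> t = 0"
  using tau_unit
  by (intro unit_norm_has_vector_derivative_orthogonal[OF open_interior _ _ tau_has_derivative])

lemma lam_in_span:
  assumes t: "t \<in> interior \<Omega>"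
  shows "lam \<in> span {\<tau> t, d\<tau> t}"
proof -
  from t interior_subset dep obtain a b c where
    "(a, b, c) \<noteq> (0, 0, 0)" "a *\<^sub>R \<tau> t + b *\<^sub>R d\<tau> t + c *\<^sub>R lam = 0"
    by blast
  moreover have "\<tau> t \<noteq> 0" using tau_unit[OF t] by auto
  moreover have "d\<tau> t \<noteq> 0" using norm_dtau[OF t] k_pos by auto
  ultimately show ?thesis
    by (intro in_span_if_dependent_on_orthogonal_pair[OF tau_dtau_orthogonal[OF t]])
qed

lemma coplanar_sphere_curve:
  assumes "{t1<..<t2} \<subseteq> \<Omega>"
  shows "coplanar_sphere_curve \<tau> d\<tau> lam k t1 t2"
proof -
  have I: "{t1<..<t2} \<subseteq> interior \<Omega>"
    using assms by (intro interior_maximal) auto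
  show ?thesis
  proof
    show "continuous_on {t1<..<t2} d\<tau>"
      using assms by (rule continuous_on_subset[OF d\<tau>_cont])
  qed (use I tau_has_derivative tau_unit norm_dtau k_pos lam_unit lam_in_span in auto)
qed

lemma norm_u_deriv:
  obtains N where "negligible N"
    and "\<And>t. t \<in> interior \<Omega> - N \<Longrightarrow>
           ((\<lambda>t. norm (u t)) has_real_derivative \<beta> t / k * (lam \<bullet> d\<tau> t)) (at t)"
proof -
  obtain N where "negligible N"
    and du: "\<And>t. t \<in> {0<..<L} - N \<Longrightarrow> (u has_vector_derivative du t) (at t)"
    and eq1: "\<And>t. t \<in> {0<..<L} - N \<Longrightarrow>
           du t + (u t \<bullet> d\<tau> t) *\<^sub>R \<tau> t = \<beta> t *\<^sub>R (lam - (lam \<bullet> \<tau> t) *\<^sub>R \<tau> t)"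
    and eq2: "\<And>t. t \<in> {0<..<L} - N \<Longrightarrow> norm (u t) *\<^sub>R d\<tau> t = k *\<^sub>R u t"
    using ae_equations by metis
  have "((\<lambda>t. norm (u t)) has_real_derivative \<beta> t / k * (lam \<bullet> d\<tau> t)) (at t)"
    if t: "t \<in> interior \<Omega> - N" for t
  proof -
    from t interior_Omega have t': "t \<in> {0<..<L} - N" by blast
    have "u t \<noteq> 0" using t interior_subset u_nonzero by blast
    have "(1 / k) *\<^sub>R d\<tau> t = (1 / (k * norm (u t))) *\<^sub>R (norm (u t) *\<^sub>R d\<tau> t)"
      using \<open>u t \<noteq> 0\<close> by simp
    also have "\<dots> = (1 / (k * norm (u t))) *\<^sub>R (k *\<^sub>R u t)"
      by (simp only: eq2[OF t'])
    also have "\<dots> = sgn (u t)"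
      using k_pos by (simp add: sgn_div_norm divide_inverse)
    finally have "sgn (u t) = (1 / k) *\<^sub>R d\<tau> t" ..
    moreover have "du t = \<beta> t *\<^sub>R (lam - (lam \<bullet> \<tau> t) *\<^sub>R \<tau> t) - (u t \<bullet> d\<tau> t) *\<^sub>R \<tau> t"
      using eq1[OF t'] by (simp add: algebra_simps)
    ultimately have "sgn (u t) \<bullet> du t = \<beta> t / k * (lam \<bullet> d\<tau> t)"
      using tau_dtau_orthogonal[of t] t
      by (simp add: inner_diff_right inner_commute[of "d\<tau> t"])
    then show ?thesis
      using has_real_derivative_norm[OF du[OF t'] \<open>u t \<noteq> 0\<close>] by simp
  qed
  with \<open>negligible N\<close> that show thesis by blast
qed

lemma lipschitz_norm_u: "\<exists>C. C-lipschitz_on {0..L} (\<lambda>t. norm (u t))"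
proof -
  obtain C where "C-lipschitz_on {0..L} u" using u_lip by blast
  moreover have "1-lipschitz_on (u ` {0..L}) norm"
    by (rule lipschitz_onI) (auto simp: dist_norm norm_triangle_ineq3)
  ultimately show ?thesis by (blast intro: lipschitz_on_compose2)
qed

lemma component_closure_subset:
  assumes "{t1<..<t2} \<subseteq> \<Omega>" "t1 < t2"
  shows "{t1..t2} \<subseteq> {0..L}"
  using subset_trans[OF closure_mono[OF assms(1)] closure_minimal[OF Omega_subset]] assms(2)
  by simp

lemma u_zero_at_component_ends:
  assumes comp: "{t1<..<t2} \<in> components \<Omega>"
  shows "u t1 = 0" "u t2 = 0"
proof -
  have "t1 < t2" using in_components_nonempty[OF comp] by simp
  with component_closure_subset[OF in_components_subset[OF comp]]
    open_interval_component_endpoints[OF comp] k_pos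
  show "u t1 = 0" "u t2 = 0" by (auto simp: \<Omega>_def zero_less_mult_iff)
qed

theorem component_contains_pole:
  assumes comp: "{t1<..<t2} \<in> components \<Omega>"
  shows "\<exists>t0\<in>{t1<..<t2}. \<tau> t0 = lam \<or> \<tau> t0 = - lam"
proof (rule ccontr)
  assume "\<not> ?thesis"
  then have avoid: "\<And>t. t \<in> {t1<..<t2} \<Longrightarrow> \<tau> t \<noteq> lam \<and> \<tau> t \<noteq> - lam" by blast
  have sub: "{t1<..<t2} \<subseteq> \<Omega>" by (rule in_components_subset[OF comp])
  have "t1 < t2" using in_components_nonempty[OF comp] by simp
  interpret coplanar_sphere_curve \<tau> d\<tau> lam k t1 t2
    by (rule coplanar_sphere_curve[OF sub])
  define tm where "tm = (t1 + t2) / 2"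
  have tm: "t1 < tm" "tm < t2" using \<open>t1 < t2\<close> by (auto simp: tm_def)
  then have "norm (u tm) > 0" using sub u_nonzero by auto
  obtain N where "negligible N"
    and dnu: "\<And>t. t \<in> interior \<Omega> - N \<Longrightarrow>
           ((\<lambda>t. norm (u t)) has_real_derivative \<beta> t / k * (lam \<bullet> d\<tau> t)) (at t)"
    using norm_u_deriv by metis
  have "I \<subseteq> interior \<Omega>" using sub by (intro interior_maximal) auto
  with interior_Omega \<beta>_pos have \<beta>_I: "\<beta> t > 0" if "t \<in> I" for t
    using that by fastforce
  obtain C where "C-lipschitz_on {0..L} (\<lambda>t. norm (u t))" using lipschitz_norm_u by blast
  then have "C-lipschitz_on {t1..t2} (\<lambda>t. norm (u t))"
    using component_closure_subset[OF sub \<open>t1 < t2\<close>] by (rule lipschitz_on_subset)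
  moreover have "((\<lambda>t. norm (u t)) has_real_derivative - \<beta> t * sine t) (at t)" if "t \<in> I - N" for t
    using dnu[of t] that \<open>I \<subseteq> interior \<Omega>\<close> k_pos by (auto simp: sine_def)
  moreover have "norm (u t1) = 0" "norm (u t2) = 0"
    using u_zero_at_component_ends[OF comp] by simp_all
  ultimately obtain p n where "p \<in> I" "- \<beta> p * sine p > 0" "n \<in> I" "- \<beta> n * sine n < 0"
    using lipschitz_on_deriv_takes_both_signs[where g = "\<lambda>t. norm (u t)" and g' = "\<lambda>t. - \<beta> t * sine t",
        OF tm _ \<open>negligible N\<close> _ _ \<open>norm (u tm) > 0\<close>]
    by (metis Diff_iff)
  then have "p \<in> I" "sine p < 0" "n \<in> I" "sine n > 0"
    using \<beta>_I[of p] \<beta>_I[of n] by (auto simp: zero_less_mult_iff mult_less_0_iff)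
  with sine_sign_cases[OF avoid] show False by force
qed

end

theorem mainTheorem14:
  fixes L k :: real
    and \<beta> :: "real \<Rightarrow> real"
    and \<tau> d\<tau> u du :: "real \<Rightarrow> real ^ 'n"
    and lam :: "real ^ 'n"
    and \<Omega> :: "real set"
    and t1 t2 :: real
  assumes n2: "CARD('n) \<ge> 2"
    and L: "L > 0"
    and \<beta>_pos: "\<forall>t\<in>{0..L}. \<beta> t > 0"
    and \<beta>_bv: "bounded_variation_on \<beta> 0 L"
    and \<beta>_inv_bdd: "\<exists>B. \<forall>t\<in>{0..L}. 1 / \<beta> t \<le> B"
    and \<tau>_lip: "\<exists>C. C-lipschitz_on {0..L} \<tau>"
    and \<tau>_sphere: "\<forall>t\<in>{0..L}. norm (\<tau> t) = 1"
    and \<tau>_deriv: "AE t in lborel. t \<in> {0<..<L} \<longrightarrow> (\<tau> has_vector_derivative d\<tau> t) (at t)"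
    and k_def: "esssup (restrict_space lborel {0<..<L}) (\<lambda>t. ereal (norm (d\<tau> t))) = ereal k"
    and k_pos: "k > 0"
    and lam_sphere: "norm lam = 1"
    and u_lip: "\<exists>C. C-lipschitz_on {0..L} u"
    and u_deriv: "AE t in lborel. t \<in> {0<..<L} \<longrightarrow> (u has_vector_derivative du t) (at t)"
    and u_nonzero: "\<exists>t\<in>{0..L}. u t \<noteq> 0"
    and eq1: "AE t in lborel. t \<in> {0<..<L} \<longrightarrow>
               du t + (u t \<bullet> d\<tau> t) *\<^sub>R \<tau> t = \<beta> t *\<^sub>R (lam - (lam \<bullet> \<tau> t) *\<^sub>R \<tau> t)"
    and eq2: "AE t in lborel. t \<in> {0<..<L} \<longrightarrow> norm (u t) *\<^sub>R d\<tau> t = k *\<^sub>R u t"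
    and \<Omega>_def: "\<Omega> = {t \<in> {0..L}. k * norm (u t) > 0}"
    and d\<tau>_cont: "continuous_on \<Omega> d\<tau>"
    and dep: "\<forall>t\<in>\<Omega>. \<exists>a b c. (a, b, c) \<noteq> (0, 0, 0) \<and>
                 a *\<^sub>R \<tau> t + b *\<^sub>R d\<tau> t + c *\<^sub>R lam = 0"
  shows "({t1<..<t2} \<subseteq> \<Omega> \<longrightarrow>
            (\<exists>e \<phi>. norm e = 1 \<and> e \<bullet> lam = 0 \<and>
               (\<forall>t\<in>{t1<..<t2}. \<tau> t = cos (k * t + \<phi>) *\<^sub>R lam + sin (k * t + \<phi>) *\<^sub>R e)))
       \<and> ({t1<..<t2} \<in> components \<Omega> \<longrightarrow>
            (\<exists>t0\<in>{t1<..<t2}. \<tau> t0 = lam \<or> \<tau> t0 = - lam))"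
proof -
  interpret standing_assumptions L k \<beta> \<tau> d\<tau> u du lam \<Omega>
    by (rule standing_assumptions.intro) fact+
  show ?thesis
  proof (intro conjI impI)
    assume sub: "{t1<..<t2} \<subseteq> \<Omega>"
    show "\<exists>e \<phi>. norm e = 1 \<and> e \<bullet> lam = 0 \<and>
        (\<forall>t\<in>{t1<..<t2}. \<tau> t = cos (k * t + \<phi>) *\<^sub>R lam + sin (k * t + \<phi>) *\<^sub>R e)"
    proof (cases "t1 < t2")
      case True
      interpret coplanar_sphere_curve \<tau> d\<tau> lam k t1 t2
        by (rule coplanar_sphere_curve[OF sub])
      from great_circle[OF True] show ?thesis by metis
    next
      case False
      obtain e :: "real ^ 'n" where "e \<noteq> 0" "orthogonal lam e"
        using orthogonal_to_vector_exists[of lam] n2 by auto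
      with False show ?thesis
        by (intro exI[of _ "sgn e"] exI[of _ 0]) (auto simp: orthogonal_def sgn_div_norm norm_sgn inner_commute[of e lam])
    qed
  next
    assume "{t1<..<t2} \<in> components \<Omega>"
    then show "\<exists>t0\<in>{t1<..<t2}. \<tau> t0 = lam \<or> \<tau> t0 = - lam"
      by (rule component_contains_pole)
  qed
qed

end
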